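(* Let $k\in\mathbb{N}$, $j\in\mathbb{N}$ with $j\ge k+1$, and $0<\theta\le\pi$. Write $\sigma=\sin\frac{\theta}{2}$ and $L=\ln\sigma$. Then \[ \begin{aligned} \mathrm{Ls}_j^{(k)}(\theta) &=(\ln2)^{j}\left(\frac{2\sigma}{\ln2}\right)^{k+1}\Biggl[k!\sum_{q=1}^{\infty}\frac{(-1)^{q+1}}{(k+2q)!}(2\sigma)^{2q}Q(k+1,2q;2) \sum_{\ell=0}^{j-k-1}\binom{j-k-1}{\ell}\frac{1}{(\ln 2)^{\ell}}\sum_{p=0}^{\ell}\frac{(-1)^p\langle\ell\rangle_{p}\,L^{\ell-p}}{(k+2q+1)^{p+1}}\\ &\qquad-\sum_{\ell=0}^{j-k-1}\binom{j-k-1}{\ell}\frac{1}{(\ln 2)^{\ell}}\sum_{p=0}^{\ell}\frac{(-1)^p\langle\ell\rangle_{p}\,L^{\ell-p}}{(k+1)^{p+1}}\Biggr], \end{aligned} \] with the convention $0^0=1$ (relevant when $\theta=\pi$, $L=0$).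
   Context: The generalized logsine function is $\mathrm{Ls}_j^{(k)}(\theta)=-\int_{0}^{\theta}x^k\left(\ln\left|2\sin\frac{x}{2}\right|\right)^{j-k-1}dx$ for integers $j\ge k+1\ge1$ and real $\theta$. The falling factorial is $\langle z\rangle_p=z(z-1)\cdots(z-p+1)$ for $p\in\mathbb{N}$, $\langle z\rangle_0=1$. $s(n,k)$ denotes the signed Stirling numbers of the first kind, defined by $\frac{[\ln(1+x)]^k}{k!}=\sum_{n=k}^\infty s(n,k)\frac{x^n}{n!}$ for $|x|<1$; equivalently $\prod_{j=0}^{n-1}(z-j)=\sum_{k=0}^n s(n,k)z^k$. For $m\in\mathbb{N}$, $k\in\mathbb{N}_0$ and $\alpha\in\mathbb{R}$ define \[ Q(m,k;\alpha)=\sum_{\ell=0}^{k}\binom{m+\ell-1}{m-1}\, s(m+k-1,m+\ell-1)\left(\frac{m+k-\alpha}{2}\right)^{\ell}, \] with the convention $0^0=1$. *)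

theory Defs
  imports "HOL-Analysis.Analysis" "HOL-Combinatorics.Stirling"
begin

definition Ls :: "nat \<Rightarrow> nat \<Rightarrow> real \<Rightarrow> real" where
  "Ls j k \<theta> = - (LBINT x=0..\<theta>. x ^ k * (ln \<bar>2 * sin (x / 2)\<bar>) ^ (j - k - 1))"

definition falling_fact :: "real \<Rightarrow> nat \<Rightarrow> real" where
  "falling_fact z p = (\<Prod>i<p. (z - real i))"

text \<open>Signed Stirling numbers of the first kind (library: unsigned stirling).\<close>
definition stirling1s :: "nat \<Rightarrow> nat \<Rightarrow> real" where
  "stirling1s n k = (-1) ^ (n - k) * real (stirling n k)"

definition Q :: "nat \<Rightarrow> nat \<Rightarrow> real \<Rightarrow> real" where
  "Q m k \<alpha> = (\<Sum>l=0..k. real ((m + l - 1) choose (m - 1)) * stirling1s (m + k - 1) (m + l - 1)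
      * ((real (m + k) - \<alpha>) / 2) ^ l)"

end

(*
  Let P_0 = 1, P_1 = t, P_(n+2) = (t^2 + n^2) P_n (arcsin_poly) and
  a(m,n) = m! [t^m] P_n / n! (arcsin_coeff), which is nonnegative.  The recurrence of P_n makes
  H_m(y) = sum_n a(m,n) y^n satisfy (1 - y^2) H_m'' - y H_m' = m (m - 1) H_(m-2), so
  f_m(x) = 2^m H_m(sin (x/2)) satisfies f_m'' = m (m - 1) f_(m-2); with the initial values at 0
  this gives f_m(x) = x^m for |x| < pi (that is, H_m = arcsin^m).  Differentiating f_(k+1)
  expands x^k / (2^k cos (x/2)) in powers of sin (x/2) with nonnegative coefficients.

  Multiplying by 2^k cos (x/2) ln (2 sin (x/2))^r and integrating over (0, theta) term by term
  (dominated convergence: the partial sums are bounded by |x^k ln (2 sin (x/2))^r|, which is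
  bounded) turns Ls into a series of integrals of cos (x/2) sin (x/2)^n ln (2 sin (x/2))^r, which
  have explicit primitives in y = sin (x/2): y^(n+1) times a polynomial in ln y.  Only n = k + 2q
  contributes, with coefficient [t^(k+1)] P_(k+2q+1) = (-4)^q Q(k+1, 2q; 2): after the
  substitution t = 2 i h, P_(N+1)(t) / t is a multiple of the falling factorial
  <h + (N-1)/2>_N, whose Stirling expansion yields Q.
*)
theory Submission
  imports Defs "HOL-Computational_Algebra.Polynomial"
begin

section \<open>Arcsine polynomials and the numbers \<open>Q\<close>\<close>

fun arcsin_poly :: "nat \<Rightarrow> real poly" where
  "arcsin_poly 0 = 1"
| "arcsin_poly (Suc 0) = [:0, 1:]"
| "arcsin_poly (Suc (Suc n)) = [:(real n)^2, 0, 1:] * arcsin_poly n"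

lemma coeff_quadratic_mult:
  fixes c :: "'a::comm_semiring_1"
  shows "coeff ([:c, 0, 1:] * p) m = c * coeff p m + (if 2 \<le> m then coeff p (m - 2) else 0)"
proof -
  have "[:c, 0, 1:] * p = smult c p + pCons 0 (pCons 0 p)"
    by (simp add: smult_one)
  then show ?thesis by (cases m; cases "m - 1") (auto simp: coeff_pCons numeral_2_eq_2)
qed

lemma coeff_arcsin_poly_Suc_Suc:
  "coeff (arcsin_poly (Suc (Suc n))) m =
     (real n)^2 * coeff (arcsin_poly n) m + (if 2 \<le> m then coeff (arcsin_poly n) (m - 2) else 0)"
  unfolding arcsin_poly.simps by (rule coeff_quadratic_mult)

lemma coeff_arcsin_poly_nonneg: "coeff (arcsin_poly n) m \<ge> 0"
  by (induction n arbitrary: m rule: arcsin_poly.induct)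
     (auto simp: coeff_1 coeff_pCons coeff_arcsin_poly_Suc_Suc split: nat.splits)

lemma coeff_arcsin_poly_le_fact: "coeff (arcsin_poly n) m \<le> fact n"
proof (induction n arbitrary: m rule: arcsin_poly.induct)
  case (3 n)
  have "coeff (arcsin_poly (Suc (Suc n))) m \<le> (real n)^2 * fact n + fact n"
    unfolding coeff_arcsin_poly_Suc_Suc using "3.IH" by (intro add_mono mult_left_mono) auto
  also have "\<dots> = ((real n)^2 + 1) * fact n" by (simp add: algebra_simps)
  also have "\<dots> \<le> (real n + 2) * (real n + 1) * fact n"
    by (intro mult_right_mono) (auto simp: power2_eq_square algebra_simps)
  also have "\<dots> = fact (Suc (Suc n))" by (simp add: algebra_simps)
  finally show ?case .
qed (auto simp: coeff_1 coeff_pCons split: nat.splits)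

lemma coeff_arcsin_poly_eq_0: "odd (n + m) \<or> n < m \<Longrightarrow> coeff (arcsin_poly n) m = 0"
proof (induction n arbitrary: m rule: arcsin_poly.induct)
  case (3 n)
  have "coeff (arcsin_poly n) (m - 2) = 0" if "2 \<le> m"
    using "3.IH"[of "m - 2"] "3.prems" that by (auto simp: less_diff_conv)
  then show ?case using "3.IH"[of m] "3.prems" unfolding coeff_arcsin_poly_Suc_Suc by auto
qed (auto simp: coeff_1 coeff_pCons odd_pos split: nat.splits)

lemma coeff_0_arcsin_poly: "n > 0 \<Longrightarrow> coeff (arcsin_poly n) 0 = 0"
  by (induction n rule: arcsin_poly.induct) (auto simp: coeff_arcsin_poly_Suc_Suc)

definition shifted_falling_poly :: "nat \<Rightarrow> real poly" where
  "shifted_falling_poly N = (\<Prod>i<N. [:(real N - 1) / 2 - real i, 1:])"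

lemma poly_shifted_falling_poly:
  "poly (shifted_falling_poly N) h = falling_fact (h + (real N - 1) / 2) N"
  unfolding shifted_falling_poly_def falling_fact_def poly_prod by (intro prod.cong) auto

lemma degree_shifted_falling_poly: "degree (shifted_falling_poly N) \<le> N"
proof -
  have "degree (shifted_falling_poly N) \<le> sum (degree \<circ> (\<lambda>i. [:(real N - 1) / 2 - real i, 1:])) {..<N}"
    unfolding shifted_falling_poly_def by (rule degree_prod_sum_le) auto
  then show ?thesis by simp
qed

lemma shifted_falling_poly_Suc_Suc:
  "shifted_falling_poly (Suc (Suc N)) = [:- ((real N + 1)^2 / 4), 0, 1:] * shifted_falling_poly N"
proof -
  let ?f = "\<lambda>i. [:(real N + 1) / 2 - real i, 1:]"
  have "shifted_falling_poly (Suc (Suc N)) = ?f 0 * (\<Prod>i<Suc N. ?f (Suc i))"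
    unfolding shifted_falling_poly_def by (subst prod.lessThan_Suc_shift) (simp add: algebra_simps)
  also have "(\<Prod>i<Suc N. ?f (Suc i)) = (\<Prod>i<N. ?f (Suc i)) * ?f (Suc N)"
    by simp
  also have "(\<Prod>i<N. ?f (Suc i)) = shifted_falling_poly N"
    unfolding shifted_falling_poly_def by (intro prod.cong) (auto simp: field_simps)
  finally have "shifted_falling_poly (Suc (Suc N)) = (?f 0 * ?f (Suc N)) * shifted_falling_poly N"
    by (simp only: ac_simps)
  also have "?f 0 * ?f (Suc N) = [:- ((real N + 1)^2 / 4), 0, 1:]"
    by (simp add: field_simps power2_eq_square)
  finally show ?thesis .
qed

lemma coeff_arcsin_poly_shifted_falling:
  "coeff (arcsin_poly (Suc N)) (Suc k) = (-4) ^ ((N - k) div 2) * coeff (shifted_falling_poly N) k"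
proof (induction N arbitrary: k rule: nat_induct2)
  case 0
  then show ?case by (cases k) (auto simp: shifted_falling_poly_def)
next
  case 1
  then show ?case
    by (cases k; cases "k - 1")
       (auto simp: shifted_falling_poly_def coeff_pCons numeral_2_eq_2 split: nat.splits)
next
  case (step M)
  let ?R = "shifted_falling_poly" and ?e = "(M + 2 - k) div 2"
  have first: "(real (Suc M))^2 * coeff (arcsin_poly (Suc M)) (Suc k) =
      (-4) ^ ?e * (- ((real M + 1)^2 / 4) * coeff (?R M) k)"
  proof (cases "k \<le> M")
    case True
    then have "?e = Suc ((M - k) div 2)" by presburger
    then show ?thesis using step[of k] by (simp add: algebra_simps)
  next
    case False
    then show ?thesis
      using step[of k] degree_shifted_falling_poly[of M] by (simp add: coeff_eq_0)
  qed
  have second: "(if 2 \<le> Suc k then coeff (arcsin_poly (Suc M)) (Suc k - 2) else 0) =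
      (-4) ^ ?e * (if 2 \<le> k then coeff (?R M) (k - 2) else 0)"
  proof (cases "2 \<le> k")
    case True
    then have "Suc k - 2 = Suc (k - 2)" "M - (k - 2) = M + 2 - k" by auto
    then show ?thesis using True step[of "k - 2"] by simp
  next
    case False
    then show ?thesis by (auto simp: coeff_0_arcsin_poly)
  qed
  have "coeff (arcsin_poly (Suc (M + 2))) (Suc k) =
      (real (Suc M))^2 * coeff (arcsin_poly (Suc M)) (Suc k)
      + (if 2 \<le> Suc k then coeff (arcsin_poly (Suc M)) (Suc k - 2) else 0)"
    using coeff_arcsin_poly_Suc_Suc[of "Suc M" "Suc k"] by simp
  also have "\<dots> = (-4) ^ ?e * coeff (?R (M + 2)) k"
    unfolding first second
    using coeff_quadratic_mult[of "- ((real M + 1)^2 / 4)" "?R M" k]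
    by (simp add: shifted_falling_poly_Suc_Suc algebra_simps)
  finally show ?case by simp
qed

lemma falling_fact_stirling1s: "falling_fact z N = (\<Sum>i\<le>N. stirling1s N i * z ^ i)"
proof -
  have "pochhammer (-z) N = (\<Prod>i<N. - z + real i)"
    by (simp add: pochhammer_prod atLeast0LessThan)
  also have "\<dots> = (\<Prod>i<N. (-1) * (z - real i))" by (intro prod.cong) auto
  also have "\<dots> = (-1) ^ N * falling_fact z N"
    by (simp only: prod.distrib prod_constant card_lessThan falling_fact_def)
  finally have "falling_fact z N = (-1) ^ N * pochhammer (-z) N" by simp
  also have "\<dots> = (\<Sum>i\<le>N. (-1) ^ N * (real (stirling N i) * (-z) ^ i))"
    by (subst stirling_pochhammer[symmetric]) (simp add: sum_distrib_left)
  also have "\<dots> = (\<Sum>i\<le>N. stirling1s N i * z ^ i)"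
  proof (intro sum.cong refl)
    fix i assume "i \<in> {..N}"
    then have "(-1::real) ^ N = (-1) ^ (N - i) * (-1) ^ i"
      by (simp add: power_add[symmetric])
    then show "(-1) ^ N * (real (stirling N i) * (- z) ^ i) = stirling1s N i * z ^ i"
      by (simp add: stirling1s_def power_minus[of z] algebra_simps)
  qed
  finally show ?thesis .
qed

lemma shifted_falling_poly_stirling1s:
  "shifted_falling_poly N = (\<Sum>i\<le>N. smult (stirling1s N i) ([:(real N - 1) / 2, 1:] ^ i))"
  by (rule poly_eq_poly_eq_iff[THEN iffD1])
     (auto simp: poly_shifted_falling_poly falling_fact_stirling1s poly_sum algebra_simps)

lemma coeff_shifted_falling_poly:
  "coeff (shifted_falling_poly N) k =
     (\<Sum>l=0..N-k. real ((k + l) choose k) * stirling1s N (k + l) * ((real N - 1) / 2) ^ l)"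
proof (cases "k \<le> N")
  case True
  let ?c = "(real N - 1) / 2"
  have "coeff (shifted_falling_poly N) k = (\<Sum>i\<le>N. stirling1s N i * coeff ([:?c, 1:] ^ i) k)"
    unfolding shifted_falling_poly_stirling1s coeff_sum coeff_smult ..
  also have "\<dots> = (\<Sum>i\<in>{k..N}. stirling1s N i * coeff ([:?c, 1:] ^ i) k)"
  proof (intro sum.mono_neutral_right ballI)
    fix i assume "i \<in> {..N} - {k..N}"
    then have "degree ([:?c, 1:] ^ i) < k"
      using degree_power_le[of "[:?c, 1:]" i] by auto
    then show "stirling1s N i * coeff ([:?c, 1:] ^ i) k = 0" by (simp add: coeff_eq_0)
  qed auto
  also have "\<dots> = (\<Sum>l=0..N-k. real ((k + l) choose k) * stirling1s N (k + l) * ?c ^ l)"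
    using True
    by (intro sum.reindex_bij_witness[of _ "\<lambda>l. l + k" "\<lambda>i. i - k"])
       (auto simp: coeff_linear_poly_power algebra_simps)
  finally show ?thesis .
next
  case False
  then show ?thesis
    using degree_shifted_falling_poly[of N] by (auto intro!: coeff_eq_0 simp: stirling1s_def)
qed

lemma Q_eq_coeff_shifted_falling_poly: "Q (k + 1) (2 * q) 2 = coeff (shifted_falling_poly (k + 2 * q)) k"
  unfolding Q_def coeff_shifted_falling_poly by (intro sum.cong) (auto simp: algebra_simps)

lemma coeff_arcsin_poly_Q:
  "coeff (arcsin_poly (Suc (k + 2 * q))) (Suc k) = (-4) ^ q * Q (k + 1) (2 * q) 2"
  unfolding Q_eq_coeff_shifted_falling_poly coeff_arcsin_poly_shifted_falling by simp

section \<open>Expansion of \<open>x\<^sup>m\<close> in powers of \<open>sin (x / 2)\<close>\<close>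

definition arcsin_coeff :: "nat \<Rightarrow> nat \<Rightarrow> real" where
  "arcsin_coeff m n = fact m * coeff (arcsin_poly n) m / fact n"

lemma arcsin_coeff_nonneg: "arcsin_coeff m n \<ge> 0"
  unfolding arcsin_coeff_def using coeff_arcsin_poly_nonneg by simp

lemma arcsin_coeff_le_fact: "arcsin_coeff m n \<le> fact m"
proof -
  have "coeff (arcsin_poly n) m / fact n \<le> 1" using coeff_arcsin_poly_le_fact[of n m] by simp
  then show ?thesis
    unfolding arcsin_coeff_def using mult_left_mono[of _ 1 "fact m :: real"] by fastforce
qed

lemma arcsin_coeff_0: "arcsin_coeff m 0 = of_bool (m = 0)"
  by (cases m) (simp_all add: arcsin_coeff_def)

lemma arcsin_coeff_1: "arcsin_coeff m 1 = of_bool (m = 1)"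
  by (auto simp: arcsin_coeff_def coeff_pCons split: nat.splits)

lemma diffs_diffs_arcsin_coeff:
  "diffs (diffs (arcsin_coeff m)) n = (real n)^2 * arcsin_coeff m n + real m * (real m - 1) * arcsin_coeff (m - 2) n"
proof -
  let ?u = "real (Suc n) * real (Suc (Suc n))"
  have "diffs (diffs (arcsin_coeff m)) n = ?u * (fact m * coeff (arcsin_poly (Suc (Suc n))) m / (?u * fact n))"
    by (simp add: diffs_def arcsin_coeff_def algebra_simps del: arcsin_poly.simps)
  also have "\<dots> = fact m * coeff (arcsin_poly (Suc (Suc n))) m / fact n"
    by (simp del: of_nat_Suc arcsin_poly.simps)
  also have "\<dots> = (real n)^2 * arcsin_coeff m n
      + fact m * (if 2 \<le> m then coeff (arcsin_poly n) (m - 2) else 0) / fact n"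
    unfolding coeff_arcsin_poly_Suc_Suc arcsin_coeff_def by (simp add: field_simps del: arcsin_poly.simps)
  also have "fact m * (if 2 \<le> m then coeff (arcsin_poly n) (m - 2) else 0) / fact n =
      real m * (real m - 1) * arcsin_coeff (m - 2) n"
  proof (cases "2 \<le> m")
    case True
    then obtain m' where "m = Suc (Suc m')" by (cases m; cases "m - 1") auto
    then show ?thesis by (simp add: arcsin_coeff_def field_simps)
  next
    case False
    then have "m = 0 \<or> m = 1" by auto
    then show ?thesis using False by auto
  qed
  finally show ?thesis .
qed

lemma summable_arcsin_coeff: "\<bar>y\<bar> < 1 \<Longrightarrow> summable (\<lambda>n. arcsin_coeff m n * y ^ n)"
proof (rule summable_comparison_test)
  assume y: "\<bar>y\<bar> < 1"
  show "\<exists>N. \<forall>n\<ge>N. norm (arcsin_coeff m n * y ^ n) \<le> fact m * \<bar>y\<bar> ^ n"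
    using arcsin_coeff_le_fact arcsin_coeff_nonneg
    by (auto simp: abs_mult power_abs intro!: mult_right_mono)
  show "summable (\<lambda>n. fact m * \<bar>y\<bar> ^ n)"
    using y by (intro summable_mult summable_geometric) auto
qed

lemma summable_diffs_arcsin_coeff: "\<bar>y\<bar> < 1 \<Longrightarrow> summable (\<lambda>n. diffs (arcsin_coeff m) n * y ^ n)"
  by (rule termdiff_converges[where K=1]) (auto intro: summable_arcsin_coeff)

lemma summable_diffs_diffs_arcsin_coeff:
  "\<bar>y\<bar> < 1 \<Longrightarrow> summable (\<lambda>n. diffs (diffs (arcsin_coeff m)) n * y ^ n)"
  by (rule termdiff_converges[where K=1]) (auto intro: summable_diffs_arcsin_coeff)

definition arcsin_series :: "nat \<Rightarrow> real \<Rightarrow> real" where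
  "arcsin_series m y = (\<Sum>n. arcsin_coeff m n * y ^ n)"

definition arcsin_series' :: "nat \<Rightarrow> real \<Rightarrow> real" where
  "arcsin_series' m y = (\<Sum>n. diffs (arcsin_coeff m) n * y ^ n)"

definition arcsin_series'' :: "nat \<Rightarrow> real \<Rightarrow> real" where
  "arcsin_series'' m y = (\<Sum>n. diffs (diffs (arcsin_coeff m)) n * y ^ n)"

lemma arcsin_series_has_derivative:
  "\<bar>y\<bar> < 1 \<Longrightarrow> (arcsin_series m has_field_derivative arcsin_series' m y) (at y)"
  unfolding arcsin_series_def[abs_def] arcsin_series'_def
  by (rule termdiffs_strong'[where K=1]) (auto intro: summable_arcsin_coeff)

lemma arcsin_series'_has_derivative:
  "\<bar>y\<bar> < 1 \<Longrightarrow> (arcsin_series' m has_field_derivative arcsin_series'' m y) (at y)"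
  unfolding arcsin_series'_def[abs_def] arcsin_series''_def
  by (rule termdiffs_strong'[where K=1]) (auto intro: summable_diffs_arcsin_coeff)

lemma sums_index_mult_if_sums_diffs:
  fixes c :: "nat \<Rightarrow> real"
  assumes "(\<lambda>n. diffs c n * y ^ n) sums s"
  shows "(\<lambda>n. real n * c n * y ^ n) sums (y * s)"
proof -
  have "(\<lambda>n. real (Suc n) * c (Suc n) * y ^ Suc n) sums (y * s)"
    using sums_mult[OF assms, of y] by (simp add: diffs_def algebra_simps)
  then show ?thesis using sums_Suc_iff[of "\<lambda>n. real n * c n * y ^ n"] by simp
qed

lemma sums_index2_mult_if_sums_diffs2:
  fixes c :: "nat \<Rightarrow> real"
  assumes "(\<lambda>n. diffs (diffs c) n * y ^ n) sums s"
  shows "(\<lambda>n. real n * (real n - 1) * c n * y ^ n) sums (y^2 * s)"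
proof -
  have "(\<lambda>n. real (n + 2) * (real (n + 2) - 1) * c (n + 2) * y ^ (n + 2)) sums (y^2 * s)"
    using sums_mult[OF assms, of "y^2"] by (simp add: diffs_def algebra_simps power_add power2_eq_square)
  then show ?thesis
    using sums_iff_shift[of "\<lambda>n. real n * (real n - 1) * c n * y ^ n" 2] by (simp add: numeral_2_eq_2)
qed

lemma arcsin_series_ode:
  assumes "\<bar>y\<bar> < 1"
  shows "(1 - y^2) * arcsin_series'' m y - y * arcsin_series' m y =
    real m * (real m - 1) * arcsin_series (m - 2) y"
proof -
  let ?c = "arcsin_coeff m"
  have S'': "(\<lambda>n. diffs (diffs ?c) n * y ^ n) sums arcsin_series'' m y"
    unfolding arcsin_series''_def using summable_diffs_diffs_arcsin_coeff[OF assms] by (rule summable_sums)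
  have S': "(\<lambda>n. diffs ?c n * y ^ n) sums arcsin_series' m y"
    unfolding arcsin_series'_def using summable_diffs_arcsin_coeff[OF assms] by (rule summable_sums)
  have S: "(\<lambda>n. real m * (real m - 1) * (arcsin_coeff (m - 2) n * y ^ n)) sums
      (real m * (real m - 1) * arcsin_series (m - 2) y)"
    unfolding arcsin_series_def
    using summable_arcsin_coeff[OF assms] by (intro sums_mult summable_sums)
  have "(\<lambda>n. diffs (diffs ?c) n * y ^ n - (real n * (real n - 1) * ?c n * y ^ n + real n * ?c n * y ^ n))
      sums (arcsin_series'' m y - (y^2 * arcsin_series'' m y + y * arcsin_series' m y))"
    by (intro sums_diff sums_add S'' sums_index_mult_if_sums_diffs S' sums_index2_mult_if_sums_diffs2)
  also have "(\<lambda>n. diffs (diffs ?c) n * y ^ n - (real n * (real n - 1) * ?c n * y ^ n + real n * ?c n * y ^ n))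
      = (\<lambda>n. real m * (real m - 1) * (arcsin_coeff (m - 2) n * y ^ n))"
    by (simp add: diffs_diffs_arcsin_coeff algebra_simps power2_eq_square)
  finally have "arcsin_series'' m y - (y^2 * arcsin_series'' m y + y * arcsin_series' m y) =
      real m * (real m - 1) * arcsin_series (m - 2) y"
    by (rule sums_unique2[OF _ S])
  then show ?thesis by (simp add: algebra_simps)
qed

lemma eq_if_same_second_derivative:
  fixes f f' g g' h :: "'a::real_normed_field \<Rightarrow> 'a"
  assumes "convex S" "a \<in> S" "x \<in> S"
    and f: "\<And>x. x \<in> S \<Longrightarrow> (f has_field_derivative f' x) (at x within S)"
           "\<And>x. x \<in> S \<Longrightarrow> (f' has_field_derivative h x) (at x within S)"
    and g: "\<And>x. x \<in> S \<Longrightarrow> (g has_field_derivative g' x) (at x within S)"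
           "\<And>x. x \<in> S \<Longrightarrow> (g' has_field_derivative h x) (at x within S)"
    and "f a = g a" "f' a = g' a"
  shows "f x = g x \<and> f' x = g' x"
proof -
  have "((\<lambda>x. f' x - g' x) has_field_derivative 0) (at x within S)" if "x \<in> S" for x
    using DERIV_diff[OF f(2) g(2), OF that that] by simp
  then obtain c where c: "\<forall>x\<in>S. f' x - g' x = c"
    using has_field_derivative_zero_constant[OF \<open>convex S\<close>] by blast
  have f'g': "f' x = g' x" if "x \<in> S" for x
  proof -
    have "f' x - g' x = f' a - g' a" using c that \<open>a \<in> S\<close> by simp
    then show ?thesis using \<open>f' a = g' a\<close> by simp
  qed
  have "((\<lambda>x. f x - g x) has_field_derivative 0) (at x within S)" if "x \<in> S" for x
    using DERIV_diff[OF f(1) g(1), OF that that] f'g'[OF that] by simp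
  then obtain d where "\<forall>x\<in>S. f x - g x = d"
    using has_field_derivative_zero_constant[OF \<open>convex S\<close>] by blast
  then have "f x - g x = f a - g a" using \<open>x \<in> S\<close> \<open>a \<in> S\<close> by simp
  then show ?thesis using \<open>f a = g a\<close> f'g'[OF \<open>x \<in> S\<close>] by simp
qed

lemma abs_sin_half_less_1: "\<bar>x\<bar> < pi \<Longrightarrow> \<bar>sin (x / 2)\<bar> < 1"
proof -
  assume "\<bar>x\<bar> < pi"
  then have "cos (x / 2) > 0" by (intro cos_gt_zero_pi) auto
  then have "(sin (x / 2))^2 < 1" using sin_cos_squared_add[of "x / 2"] by (smt (verit) zero_less_power)
  then show ?thesis by (simp add: abs_square_less_1)
qed

lemma arcsin_series_sin_half_has_derivative:
  assumes "\<bar>x\<bar> < pi"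
  shows "((\<lambda>x. 2 ^ m * arcsin_series m (sin (x / 2))) has_field_derivative
      2 ^ m * arcsin_series' m (sin (x / 2)) * (cos (x / 2) / 2)) (at x)"
proof -
  have s: "((\<lambda>x. sin (x / 2)) has_field_derivative cos (x / 2) / 2) (at x)"
    by (auto intro!: derivative_eq_intros)
  show ?thesis
    using DERIV_cmult[OF DERIV_chain2[OF arcsin_series_has_derivative[OF abs_sin_half_less_1[OF assms]] s]]
    by (simp only: mult.assoc)
qed

lemma arcsin_series'_sin_half_has_derivative:
  assumes "\<bar>x\<bar> < pi"
  shows "((\<lambda>x. 2 ^ m * arcsin_series' m (sin (x / 2)) * (cos (x / 2) / 2)) has_field_derivative
      real m * (real m - 1) * (2 ^ (m - 2) * arcsin_series (m - 2) (sin (x / 2)))) (at x)"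
proof -
  let ?s = "sin (x / 2)" and ?c = "cos (x / 2)"
  have y: "\<bar>?s\<bar> < 1" by (rule abs_sin_half_less_1[OF assms])
  have s: "((\<lambda>x. sin (x / 2)) has_field_derivative ?c / 2) (at x)"
    by (auto intro!: derivative_eq_intros)
  have "((\<lambda>x. arcsin_series' m (sin (x / 2)) * (cos (x / 2) / 2)) has_field_derivative
      arcsin_series'' m ?s * (?c / 2) * (?c / 2) + (- ?s / 4) * arcsin_series' m ?s) (at x)"
    by (rule DERIV_mult[OF DERIV_chain2[OF arcsin_series'_has_derivative[OF y] s]])
       (auto intro!: derivative_eq_intros)
  also have "arcsin_series'' m ?s * (?c / 2) * (?c / 2) + (- ?s / 4) * arcsin_series' m ?s =
      (?c^2 * arcsin_series'' m ?s - ?s * arcsin_series' m ?s) / 4"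
    by (simp add: field_simps power2_eq_square)
  also have "\<dots> = ((1 - ?s^2) * arcsin_series'' m ?s - ?s * arcsin_series' m ?s) / 4"
    by (simp add: cos_squared_eq)
  also have "\<dots> = real m * (real m - 1) / 4 * arcsin_series (m - 2) ?s"
    unfolding arcsin_series_ode[OF y] by simp
  finally have "((\<lambda>x. 2 ^ m * arcsin_series' m (sin (x / 2)) * (cos (x / 2) / 2)) has_field_derivative
      2 ^ m * (real m * (real m - 1) / 4 * arcsin_series (m - 2) ?s)) (at x)"
    using DERIV_cmult by (fastforce simp only: mult.assoc)
  also have "2 ^ m * (real m * (real m - 1) / 4 * arcsin_series (m - 2) ?s) =
      real m * (real m - 1) * (2 ^ (m - 2) * arcsin_series (m - 2) ?s)"
    by (cases m; cases "m - 1") auto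
  finally show ?thesis .
qed

lemma arcsin_series_sin_half:
  assumes "\<bar>x\<bar> < pi"
  shows "2 ^ m * arcsin_series m (sin (x / 2)) = x ^ m"
    and "2 ^ m * arcsin_series' m (sin (x / 2)) * (cos (x / 2) / 2) = real m * x ^ (m - 1)"
proof -
  let ?S = "{-pi<..<pi}"
  have "x \<in> ?S \<Longrightarrow> 2 ^ m * arcsin_series m (sin (x / 2)) = x ^ m \<and>
      2 ^ m * arcsin_series' m (sin (x / 2)) * (cos (x / 2) / 2) = real m * x ^ (m - 1)" for x
  proof (induction m arbitrary: x rule: less_induct)
    case (less m)
    have IH: "real m * (real m - 1) * (2 ^ (m - 2) * arcsin_series (m - 2) (sin (x / 2))) =
        real m * (real m - 1) * x ^ (m - 2)" if "x \<in> ?S" for x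
    proof (cases "m \<ge> 2")
      case True
      then show ?thesis using less.IH[of "m - 2" x] that by simp
    next
      case False
      then have "m = 0 \<or> m = 1" by auto
      then show ?thesis by auto
    qed
    show ?case
    proof (rule eq_if_same_second_derivative[where a = 0 and S = ?S
          and f = "\<lambda>x. 2 ^ m * arcsin_series m (sin (x / 2))"
          and f' = "\<lambda>x. 2 ^ m * arcsin_series' m (sin (x / 2)) * (cos (x / 2) / 2)"
          and g = "\<lambda>x. x ^ m" and g' = "\<lambda>x. real m * x ^ (m - 1)"
          and h = "\<lambda>x. real m * (real m - 1) * x ^ (m - 2)"])
      fix x assume x: "x \<in> ?S"
      then have "\<bar>x\<bar> < pi" by auto
      from arcsin_series_sin_half_has_derivative[OF this]
      show "((\<lambda>x. 2 ^ m * arcsin_series m (sin (x / 2))) has_field_derivative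
          2 ^ m * arcsin_series' m (sin (x / 2)) * (cos (x / 2) / 2)) (at x within ?S)"
        by (rule has_field_derivative_at_within)
      from arcsin_series'_sin_half_has_derivative[OF \<open>\<bar>x\<bar> < pi\<close>, of m]
      show "((\<lambda>x. 2 ^ m * arcsin_series' m (sin (x / 2)) * (cos (x / 2) / 2)) has_field_derivative
          real m * (real m - 1) * x ^ (m - 2)) (at x within ?S)"
        unfolding IH[OF x] by (rule has_field_derivative_at_within)
      show "((\<lambda>x. x ^ m) has_field_derivative real m * x ^ (m - 1)) (at x within ?S)"
        by (auto intro!: derivative_eq_intros)
      show "((\<lambda>x. real m * x ^ (m - 1)) has_field_derivative real m * (real m - 1) * x ^ (m - 2))
          (at x within ?S)"
        by (cases m) (auto intro!: derivative_eq_intros)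
    next
      show "2 ^ m * arcsin_series m (sin (0 / 2)) = 0 ^ m"
        by (simp add: arcsin_series_def arcsin_coeff_0)
      show "2 ^ m * arcsin_series' m (sin (0 / 2)) * (cos (0 / 2) / 2) = real m * 0 ^ (m - 1)"
        by (cases "m = 1") (auto simp: arcsin_series'_def diffs_def arcsin_coeff_1[unfolded One_nat_def])
    qed (use less.prems in auto)
  qed
  then show "2 ^ m * arcsin_series m (sin (x / 2)) = x ^ m"
    and "2 ^ m * arcsin_series' m (sin (x / 2)) * (cos (x / 2) / 2) = real m * x ^ (m - 1)"
    using assms by (auto simp: abs_less_iff)
qed

definition arcsin_deriv_coeff :: "nat \<Rightarrow> nat \<Rightarrow> real" where
  "arcsin_deriv_coeff k n = fact k * coeff (arcsin_poly (Suc n)) (Suc k) / fact n"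

lemma diffs_arcsin_coeff_Suc: "diffs (arcsin_coeff (Suc k)) n = real (Suc k) * arcsin_deriv_coeff k n"
proof -
  let ?c = "coeff (arcsin_poly (Suc n)) (Suc k)"
  have "diffs (arcsin_coeff (Suc k)) n = real (Suc n) * (real (Suc k) * fact k * ?c / (real (Suc n) * fact n))"
    by (simp add: diffs_def arcsin_coeff_def del: arcsin_poly.simps of_nat_Suc)
  also have "\<dots> = real (Suc k) * (fact k * ?c / fact n)"
    by (simp del: arcsin_poly.simps of_nat_Suc)
  finally show ?thesis unfolding arcsin_deriv_coeff_def .
qed

lemma arcsin_deriv_coeff_nonneg: "arcsin_deriv_coeff k n \<ge> 0"
  unfolding arcsin_deriv_coeff_def using coeff_arcsin_poly_nonneg by simp

lemma arcsin_deriv_coeff_eq_0: "n < k \<or> odd (n + k) \<Longrightarrow> arcsin_deriv_coeff k n = 0"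
  unfolding arcsin_deriv_coeff_def by (subst coeff_arcsin_poly_eq_0) auto

lemma arcsin_deriv_coeff_Q:
  "arcsin_deriv_coeff k (k + 2 * q) = fact k * (-4) ^ q * Q (k + 1) (2 * q) 2 / fact (k + 2 * q)"
  unfolding arcsin_deriv_coeff_def coeff_arcsin_poly_Q by simp

lemma sums_arcsin_deriv_coeff_sin_half:
  assumes "\<bar>x\<bar> < pi"
  shows "(\<lambda>n. arcsin_deriv_coeff k n * sin (x / 2) ^ n) sums (x ^ k / (2 ^ k * cos (x / 2)))"
proof -
  have "(\<lambda>n. diffs (arcsin_coeff (Suc k)) n * sin (x / 2) ^ n) sums arcsin_series' (Suc k) (sin (x / 2))"
    unfolding arcsin_series'_def
    by (intro summable_sums summable_diffs_arcsin_coeff abs_sin_half_less_1 assms)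
  from sums_divide[OF this, of "real (Suc k)"]
  have "(\<lambda>n. arcsin_deriv_coeff k n * sin (x / 2) ^ n) sums (arcsin_series' (Suc k) (sin (x / 2)) / real (Suc k))"
    by (simp add: diffs_arcsin_coeff_Suc del: of_nat_Suc)
  moreover have "cos (x / 2) > 0" using assms by (intro cos_gt_zero_pi) auto
  moreover have "arcsin_series' (Suc k) (sin (x / 2)) / real (Suc k) = x ^ k / (2 ^ k * cos (x / 2))"
    using arcsin_series_sin_half(2)[OF assms, of "Suc k"] \<open>cos (x / 2) > 0\<close>
    by (simp add: field_simps)
  ultimately show ?thesis by simp
qed

section \<open>Primitives of powers of logarithms\<close>

lemma falling_fact_Suc: "falling_fact z (Suc p) = z * falling_fact (z - 1) p"
  unfolding falling_fact_def by (subst prod.lessThan_Suc_shift) (simp add: algebra_simps)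

definition log_primitive_factor :: "nat \<Rightarrow> nat \<Rightarrow> real \<Rightarrow> real" where
  "log_primitive_factor l d L =
     (\<Sum>p=0..l. (-1) ^ p * falling_fact (real l) p * L ^ (l - p) / real d ^ (p + 1))"

lemma log_primitive_factor_0: "log_primitive_factor 0 d L = 1 / real d"
  by (simp add: log_primitive_factor_def falling_fact_def)

lemma log_primitive_factor_Suc:
  "log_primitive_factor (Suc l) d L = L ^ Suc l / real d - real (Suc l) / real d * log_primitive_factor l d L"
proof -
  have "log_primitive_factor (Suc l) d L = L ^ Suc l / real d +
      (\<Sum>p=0..l. (-1) ^ Suc p * falling_fact (real (Suc l)) (Suc p) * L ^ (l - p) / real d ^ (p + 2))"
    unfolding log_primitive_factor_def by (subst sum.atLeast0_atMost_Suc_shift) (simp add: falling_fact_def)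
  also have "(\<Sum>p=0..l. (-1) ^ Suc p * falling_fact (real (Suc l)) (Suc p) * L ^ (l - p) / real d ^ (p + 2))
      = - (real (Suc l) / real d) * log_primitive_factor l d L"
    unfolding log_primitive_factor_def sum_distrib_left
    by (intro sum.cong; cases "d = 0") (auto simp: falling_fact_Suc field_simps)
  finally show ?thesis by simp
qed

definition log_primitive :: "nat \<Rightarrow> nat \<Rightarrow> real \<Rightarrow> real" where
  "log_primitive l d y = y ^ d * log_primitive_factor l d (ln y)"

lemma log_primitive_has_derivative:
  assumes "y > 0" "d \<ge> 1"
  shows "(log_primitive l d has_field_derivative y ^ (d - 1) * ln y ^ l) (at y)"
proof (induction l)
  case 0
  have "((\<lambda>y. y ^ d / real d) has_field_derivative real d * y ^ (d - 1) / real d) (at y)"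
    by (auto intro!: derivative_eq_intros)
  then show ?case using assms unfolding log_primitive_def[abs_def] log_primitive_factor_0 by simp
next
  case (Suc l)
  have "log_primitive (Suc l) d =
      (\<lambda>y. y ^ d * ln y ^ Suc l / real d - real (Suc l) / real d * log_primitive l d y)"
    unfolding log_primitive_def[abs_def] log_primitive_factor_Suc by (auto simp: algebra_simps)
  moreover have "((\<lambda>y. y ^ d * ln y ^ Suc l / real d - real (Suc l) / real d * log_primitive l d y)
      has_field_derivative
        (real d * y ^ (d - 1) * ln y ^ Suc l + real (Suc l) * ln y ^ l * (1 / y) * y ^ d) / real d
        - real (Suc l) / real d * (y ^ (d - 1) * ln y ^ l)) (at y)"
  proof -
    have "((\<lambda>y. ln y ^ Suc l) has_field_derivative real (Suc l) * ln y ^ l * (1 / y)) (at y)"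
      using DERIV_chain2[OF DERIV_pow[of "Suc l" "ln y"] DERIV_ln[OF assms(1)]]
      by (simp add: divide_inverse)
    then show ?thesis
      by (intro DERIV_diff DERIV_cmult DERIV_cdivide DERIV_mult DERIV_pow Suc)
         (auto intro!: derivative_eq_intros)
  qed
  moreover have "y ^ d = y * y ^ (d - 1)"
    using assms by (cases d) auto
  ultimately show ?case
    using assms by (simp add: field_simps)
qed

definition log2_primitive_factor :: "nat \<Rightarrow> nat \<Rightarrow> real \<Rightarrow> real" where
  "log2_primitive_factor r d L = (\<Sum>l=0..r. real (r choose l) / ln 2 ^ l * log_primitive_factor l d L)"

definition log2_primitive :: "nat \<Rightarrow> nat \<Rightarrow> real \<Rightarrow> real" where
  "log2_primitive r d y = (\<Sum>l=0..r. real (r choose l) * ln 2 ^ (r - l) * log_primitive l d y)"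

lemma log2_primitive_eq:
  "y > 0 \<Longrightarrow> log2_primitive r d y = y ^ d * ln 2 ^ r * log2_primitive_factor r d (ln y)"
  unfolding log2_primitive_def log2_primitive_factor_def log_primitive_def sum_distrib_left
  by (intro sum.cong refl) (auto simp: power_diff field_simps)

lemma log2_primitive_0: "d \<ge> 1 \<Longrightarrow> log2_primitive r d 0 = 0"
  by (simp add: log2_primitive_def log_primitive_def power_0_left)

lemma log2_primitive_has_derivative:
  assumes "y > 0" "d \<ge> 1"
  shows "(log2_primitive r d has_field_derivative y ^ (d - 1) * ln (2 * y) ^ r) (at y)"
proof -
  have "(log2_primitive r d has_field_derivative
      (\<Sum>l=0..r. real (r choose l) * ln 2 ^ (r - l) * (y ^ (d - 1) * ln y ^ l))) (at y)"
    unfolding log2_primitive_def[abs_def]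
    by (intro DERIV_sum DERIV_cmult log_primitive_has_derivative assms)
  also have "(\<Sum>l=0..r. real (r choose l) * ln 2 ^ (r - l) * (y ^ (d - 1) * ln y ^ l))
      = y ^ (d - 1) * (ln y + ln 2) ^ r"
    by (simp add: binomial_ring sum_distrib_left atMost_atLeast0 algebra_simps)
  also have "ln y + ln 2 = ln (2 * y)" using assms by (simp add: ln_mult)
  finally show ?thesis .
qed

section \<open>Estimates\<close>

lemma mult_abs_ln_power_le:
  assumes "0 < y" "y \<le> 1"
  shows "y * \<bar>ln y\<bar> ^ r \<le> real r ^ r"
proof (cases "r = 0")
  case False
  define z where "z = y powr (1 / real r)"
  have z: "z > 0" "z ^ r = y"
    unfolding z_def using assms False by (simp_all add: powr_realpow[symmetric] powr_powr)
  have "- ln z \<le> 1 / z"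
    using ln_le_minus_one[of "1 / z"] z by (simp add: ln_div)
  moreover have "ln z = ln y / real r" unfolding z_def using assms by (simp add: ln_powr)
  ultimately have "\<bar>ln y\<bar> \<le> real r / z"
    using assms False z by (simp add: field_simps abs_if)
  then have "\<bar>ln y\<bar> ^ r \<le> real r ^ r / y"
    using power_mono[of "\<bar>ln y\<bar>" "real r / z" r] z by (simp add: power_divide)
  then show ?thesis using assms by (simp add: field_simps)
qed (use assms in simp)

lemma tendsto_power_mult_ln_power:
  assumes "d \<ge> 2"
  shows "((\<lambda>y::real. y ^ d * ln y ^ s) \<longlongrightarrow> 0) (at_right 0)"
proof (rule Lim_null_comparison)
  have "eventually (\<lambda>y. y \<in> {0<..<1}) (at_right (0::real))"
    by (intro eventually_at_right_real) auto
  then show "eventually (\<lambda>y. norm (y ^ d * ln y ^ s) \<le> real s ^ s * y) (at_right 0)"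
  proof eventually_elim
    case (elim y)
    then have y: "0 < y" "y < 1" by auto
    have "norm (y ^ d * ln y ^ s) = y ^ (d - 1) * (y * \<bar>ln y\<bar> ^ s)"
      using y assms by (cases d) (auto simp: abs_mult power_abs)
    also have "\<dots> \<le> y * real s ^ s"
      using y assms mult_abs_ln_power_le[of y s] power_decreasing[of 1 "d - 1" y]
      by (intro mult_mono) auto
    finally show ?case by (simp add: mult.commute)
  qed
  show "((\<lambda>y. real s ^ s * y) \<longlongrightarrow> 0) (at_right (0::real))"
    by (auto intro!: tendsto_eq_intros)
qed

lemma log2_primitive_tendsto_0:
  assumes "d \<ge> 2"
  shows "(log2_primitive r d \<longlongrightarrow> 0) (at_right 0)"
proof -
  have "log_primitive l d = (\<lambda>y. \<Sum>p=0..l. (-1) ^ p * falling_fact (real l) p / real d ^ (p + 1)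
      * (y ^ d * ln y ^ (l - p)))" for l
    unfolding log_primitive_def[abs_def] log_primitive_factor_def by (auto simp: sum_distrib_left algebra_simps)
  then show ?thesis
    unfolding log2_primitive_def[abs_def]
    by (simp only:) (intro tendsto_null_sum tendsto_mult_right_zero tendsto_power_mult_ln_power assms)
qed

lemma mult_cos_le_sin:
  assumes "0 \<le> t" "t \<le> pi"
  shows "t * cos t \<le> sin t"
proof -
  have "sin 0 - 0 * cos 0 \<le> sin t - t * cos t"
  proof (rule DERIV_nonneg_imp_nondecreasing[OF assms(1)])
    fix u assume u: "0 \<le> u" "u \<le> t"
    have "((\<lambda>u. sin u - u * cos u) has_field_derivative u * sin u) (at u)"
      by (auto intro!: derivative_eq_intros)
    moreover have "u * sin u \<ge> 0" using u assms by (intro mult_nonneg_nonneg sin_ge_zero) auto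
    ultimately show "\<exists>y. ((\<lambda>u. sin u - u * cos u) has_field_derivative y) (at u) \<and> y \<ge> 0" by blast
  qed
  then show ?thesis by simp
qed

lemma Jordan_inequality:
  assumes "0 \<le> t" "t \<le> pi / 2"
  shows "2 / pi * t \<le> sin t"
proof (cases "t = 0")
  case False
  have "sin (pi / 2) / (pi / 2) \<le> sin t / t"
  proof (rule DERIV_nonpos_imp_nonincreasing[OF assms(2)])
    fix u assume u: "t \<le> u" "u \<le> pi / 2"
    with False assms have "u > 0" by linarith
    then have "((\<lambda>u. sin u / u) has_field_derivative (cos u * u - sin u * 1) / (u * u)) (at u)"
      by (intro DERIV_divide DERIV_sin DERIV_ident) simp
    moreover have "(cos u * u - sin u * 1) / (u * u) \<le> 0"
      using mult_cos_le_sin[of u] u \<open>u > 0\<close> by (intro divide_nonpos_nonneg) (auto simp: mult.commute)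
    ultimately show "\<exists>y. ((\<lambda>u. sin u / u) has_field_derivative y) (at u) \<and> y \<le> 0" by blast
  qed
  then have "2 / pi \<le> sin t / t" by simp
  moreover have "t > 0" using False assms by simp
  ultimately show ?thesis by (simp add: pos_le_divide_eq)
qed simp

lemma le_pi_mult_sin_half: "0 \<le> x \<Longrightarrow> x \<le> pi \<Longrightarrow> x \<le> pi * sin (x / 2)"
  using Jordan_inequality[of "x / 2"] by (simp add: field_simps)

lemma mult_abs_ln_power_le_two:
  assumes "0 < z" "z \<le> 2"
  shows "z * \<bar>ln z\<bar> ^ r \<le> 2 + real r ^ r"
proof (cases "z \<le> 1")
  case True
  then show ?thesis using mult_abs_ln_power_le[OF assms(1) True, of r] by simp
next
  case False
  then have "\<bar>ln z\<bar> \<le> 1" using ln_le_minus_one[of z] assms by simp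
  then have "z * \<bar>ln z\<bar> ^ r \<le> 2 * 1" using assms by (intro mult_mono power_le_one) auto
  then show ?thesis using zero_le_power[of "real r" r] by linarith
qed

lemma power_mult_abs_ln_sin_half_le:
  assumes "k \<ge> 1" "0 < x" "x \<le> pi"
  shows "x ^ k * \<bar>ln (2 * sin (x / 2))\<bar> ^ r \<le> pi ^ k / 2 * (2 + real r ^ r)"
proof -
  let ?z = "2 * sin (x / 2)"
  have z: "0 < ?z" "?z \<le> 2" using assms by (auto intro: sin_gt_zero)
  have "x ^ k = x ^ (k - 1) * x" using assms(1) by (cases k) auto
  also have "\<dots> \<le> pi ^ (k - 1) * (pi / 2 * ?z)"
    using assms le_pi_mult_sin_half[of x] by (intro mult_mono power_mono) auto
  finally have "x ^ k * \<bar>ln ?z\<bar> ^ r \<le> pi ^ (k - 1) * (pi / 2 * ?z) * \<bar>ln ?z\<bar> ^ r"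
    by (rule mult_right_mono) simp
  also have "\<dots> = pi ^ (k - 1) * pi / 2 * (?z * \<bar>ln ?z\<bar> ^ r)"
    by (simp add: algebra_simps)
  also have "\<dots> \<le> pi ^ (k - 1) * pi / 2 * (2 + real r ^ r)"
    using z by (intro mult_left_mono mult_abs_ln_power_le_two) auto
  also have "pi ^ (k - 1) * pi = pi ^ k" using assms(1) by (simp add: power_eq_if)
  finally show ?thesis by simp
qed

section \<open>Termwise integration\<close>

lemma continuous_on_log2_primitive:
  assumes "d \<ge> 2"
  shows "continuous_on {0..} (log2_primitive r d)"
proof -
  have "continuous (at y within {0..}) (log2_primitive r d)" if "y \<ge> 0" for y
  proof (cases "y = 0")
    case True
    then show ?thesis
      using log2_primitive_tendsto_0[OF assms] log2_primitive_0[of d] assms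
      by (simp add: continuous_within at_within_Ici_at_right)
  next
    case False
    then have "isCont (log2_primitive r d) y"
      using log2_primitive_has_derivative[of y d r] that assms by (auto intro: DERIV_isCont)
    then show ?thesis by (rule continuous_at_imp_continuous_at_within)
  qed
  then show ?thesis by (simp add: continuous_on_eq_continuous_within)
qed

lemma has_integral_cos_sin_half_ln_power:
  assumes "0 < \<theta>" "\<theta> \<le> pi" "d \<ge> 2"
  shows "((\<lambda>x. cos (x / 2) * sin (x / 2) ^ (d - 1) * ln (2 * sin (x / 2)) ^ r) has_integral
           2 * log2_primitive r d (sin (\<theta> / 2))) {0..\<theta>}"
proof -
  let ?F = "\<lambda>x. 2 * log2_primitive r d (sin (x / 2))"
  have "((\<lambda>x. cos (x / 2) * sin (x / 2) ^ (d - 1) * ln (2 * sin (x / 2)) ^ r) has_integral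
      ?F \<theta> - ?F 0) {0..\<theta>}"
  proof (rule fundamental_theorem_of_calculus_interior)
    have "sin (x / 2) \<in> {0..}" if "x \<in> {0..\<theta>}" for x
      using that assms by (auto intro!: sin_ge_zero)
    then show "continuous_on {0..\<theta>} ?F"
      by (intro continuous_on_mult continuous_on_const
            continuous_on_compose2[OF continuous_on_log2_primitive[OF assms(3)]])
         (auto intro!: continuous_intros)
    fix x assume x: "x \<in> {0<..<\<theta>}"
    then have "sin (x / 2) > 0" using assms by (intro sin_gt_zero) auto
    then have W: "(log2_primitive r d has_field_derivative
        sin (x / 2) ^ (d - 1) * ln (2 * sin (x / 2)) ^ r) (at (sin (x / 2)))"
      using assms by (intro log2_primitive_has_derivative) auto
    have s: "((\<lambda>x. sin (x / 2)) has_field_derivative cos (x / 2) / 2) (at x)"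
      by (auto intro!: derivative_eq_intros)
    have "(?F has_field_derivative
        2 * (sin (x / 2) ^ (d - 1) * ln (2 * sin (x / 2)) ^ r * (cos (x / 2) / 2))) (at x)"
      using DERIV_cmult[OF DERIV_chain2[OF W s], of 2] .
    then show "(?F has_vector_derivative cos (x / 2) * sin (x / 2) ^ (d - 1) * ln (2 * sin (x / 2)) ^ r) (at x)"
      by (simp add: has_real_derivative_iff_has_vector_derivative algebra_simps)
  qed (use assms in simp)
  then show ?thesis using log2_primitive_0[of d] assms by simp
qed

lemma has_integral_arcsin_deriv_term:
  assumes "k \<ge> 1" "0 < \<theta>" "\<theta> \<le> pi"
  shows "((\<lambda>x. 2 ^ k * cos (x / 2) * ln (2 * sin (x / 2)) ^ r * (arcsin_deriv_coeff k n * sin (x / 2) ^ n))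
      has_integral 2 ^ Suc k * arcsin_deriv_coeff k n * log2_primitive r (Suc n) (sin (\<theta> / 2))) {0<..<\<theta>}"
proof (cases "n = 0")
  case True
  then show ?thesis using assms by (simp add: arcsin_deriv_coeff_eq_0)
next
  case False
  have "((\<lambda>x. cos (x / 2) * sin (x / 2) ^ (Suc n - 1) * ln (2 * sin (x / 2)) ^ r) has_integral
      2 * log2_primitive r (Suc n) (sin (\<theta> / 2))) {0..\<theta>}"
    using assms False by (intro has_integral_cos_sin_half_ln_power) auto
  from has_integral_mult_right[OF this, of "2 ^ k * arcsin_deriv_coeff k n"] show ?thesis
    by (simp add: has_integral_Icc_iff_Ioo algebra_simps)
qed

lemma
  fixes x :: real and k r :: nat
  assumes "k \<ge> 1" "0 < x" "x < pi"
  defines "c \<equiv> 2 ^ k * cos (x / 2) * ln (2 * sin (x / 2)) ^ r"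
  shows tendsto_partial_sums_arcsin_deriv_sin_half:
      "(\<lambda>M. c * (\<Sum>n<M. arcsin_deriv_coeff k n * sin (x / 2) ^ n)) \<longlonglongrightarrow> x ^ k * ln (2 * sin (x / 2)) ^ r"
    and abs_partial_sums_arcsin_deriv_sin_half_le:
      "\<bar>c * (\<Sum>n<M. arcsin_deriv_coeff k n * sin (x / 2) ^ n)\<bar> \<le> pi ^ k / 2 * (2 + real r ^ r)"
proof -
  have x: "\<bar>x\<bar> < pi" "sin (x / 2) \<ge> 0" "cos (x / 2) > 0"
    using assms by (auto intro!: sin_ge_zero cos_gt_zero_pi)
  have sums: "(\<lambda>n. arcsin_deriv_coeff k n * sin (x / 2) ^ n) sums (x ^ k / (2 ^ k * cos (x / 2)))"
    using sums_arcsin_deriv_coeff_sin_half x(1) .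
  have c: "c * (x ^ k / (2 ^ k * cos (x / 2))) = x ^ k * ln (2 * sin (x / 2)) ^ r"
    using x(3) unfolding c_def by (simp add: field_simps)
  show "(\<lambda>M. c * (\<Sum>n<M. arcsin_deriv_coeff k n * sin (x / 2) ^ n)) \<longlonglongrightarrow> x ^ k * ln (2 * sin (x / 2)) ^ r"
    using tendsto_mult_left[OF sums[unfolded sums_def], of c] unfolding c .
  have terms: "0 \<le> arcsin_deriv_coeff k n * sin (x / 2) ^ n" for n
    using x arcsin_deriv_coeff_nonneg by simp
  then have "0 \<le> (\<Sum>n<M. arcsin_deriv_coeff k n * sin (x / 2) ^ n)"
    by (intro sum_nonneg)
  moreover have "(\<Sum>n<M. arcsin_deriv_coeff k n * sin (x / 2) ^ n) \<le> x ^ k / (2 ^ k * cos (x / 2))"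
    using sum_le_suminf[OF sums_summable[OF sums], of "{..<M}"] terms sums_unique[OF sums] by auto
  ultimately have "\<bar>c * (\<Sum>n<M. arcsin_deriv_coeff k n * sin (x / 2) ^ n)\<bar> \<le>
      \<bar>c\<bar> * (x ^ k / (2 ^ k * cos (x / 2)))"
    unfolding abs_mult by (intro mult_left_mono) auto
  also have "\<dots> = x ^ k * \<bar>ln (2 * sin (x / 2))\<bar> ^ r"
    using c assms x by (simp add: abs_mult power_abs)
  also have "\<dots> \<le> pi ^ k / 2 * (2 + real r ^ r)"
    using assms by (intro power_mult_abs_ln_sin_half_le) auto
  finally show "\<bar>c * (\<Sum>n<M. arcsin_deriv_coeff k n * sin (x / 2) ^ n)\<bar> \<le> pi ^ k / 2 * (2 + real r ^ r)" .
qed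

lemma
  assumes "k \<ge> 1" "0 < \<theta>" "\<theta> \<le> pi"
  shows sums_integral_power_ln_sin_half:
      "(\<lambda>n. 2 ^ Suc k * arcsin_deriv_coeff k n * log2_primitive r (Suc n) (sin (\<theta> / 2))) sums
         integral {0<..<\<theta>} (\<lambda>x. x ^ k * ln (2 * sin (x / 2)) ^ r)"
    and absolutely_integrable_power_ln_sin_half:
      "(\<lambda>x. x ^ k * ln (2 * sin (x / 2)) ^ r) absolutely_integrable_on {0<..<\<theta>}"
proof -
  let ?S = "{0<..<\<theta>}" and ?C = "pi ^ k / 2 * (2 + real r ^ r)"
  let ?g = "\<lambda>x. x ^ k * ln (2 * sin (x / 2)) ^ r"
  define f where "f M (x::real) = 2 ^ k * cos (x / 2) * ln (2 * sin (x / 2)) ^ r *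
      (\<Sum>n<M. arcsin_deriv_coeff k n * sin (x / 2) ^ n)" for M x
  define T where "T n = 2 ^ Suc k * arcsin_deriv_coeff k n * log2_primitive r (Suc n) (sin (\<theta> / 2))" for n
  have integral: "(f M has_integral (\<Sum>n<M. T n)) ?S" for M
    unfolding f_def T_def sum_distrib_left
    by (intro has_integral_sum has_integral_arcsin_deriv_term assms) auto
  have conv: "(\<lambda>M. f M x) \<longlonglongrightarrow> ?g x" if "x \<in> ?S" for x
    unfolding f_def using that assms by (intro tendsto_partial_sums_arcsin_deriv_sin_half) auto
  have bound: "norm (f M x) \<le> ?C" if "x \<in> ?S" for x M
    unfolding f_def real_norm_def using that assms by (intro abs_partial_sums_arcsin_deriv_sin_half_le) auto
  have C: "(\<lambda>x. ?C) integrable_on ?S"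
    using integrable_const_ivl[of ?C 0 \<theta>] by (simp add: integrable_on_Icc_iff_Ioo)
  have "?g integrable_on ?S" "(\<lambda>M. integral ?S (f M)) \<longlonglongrightarrow> integral ?S ?g"
    using dominated_convergence[where f = f and g = ?g and h = "\<lambda>x. ?C", OF _ C bound conv] integral
    by blast+
  moreover have "integral ?S (f M) = (\<Sum>n<M. T n)" for M
    using integral by (rule integral_unique)
  ultimately show "(\<lambda>n. 2 ^ Suc k * arcsin_deriv_coeff k n * log2_primitive r (Suc n) (sin (\<theta> / 2))) sums
      integral ?S ?g"
    unfolding sums_def T_def by simp
  have "norm (?g x) \<le> ?C" if "x \<in> ?S" for x
    using bound[OF that] conv[OF that] by (intro LIMSEQ_le_const2[OF tendsto_norm]) auto
  then show "?g absolutely_integrable_on ?S"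
    using \<open>?g integrable_on ?S\<close> C by (rule absolutely_integrable_integrable_bound)
qed

lemma Ls_eq_integral:
  assumes "k \<ge> 1" "0 < \<theta>" "\<theta> \<le> pi"
  shows "Ls j k \<theta> = - integral {0<..<\<theta>} (\<lambda>x. x ^ k * ln (2 * sin (x / 2)) ^ (j - k - 1))"
proof -
  let ?S = "{0<..<\<theta>}" and ?g = "\<lambda>x. x ^ k * ln (2 * sin (x / 2)) ^ (j - k - 1)"
  have "einterval 0 (ereal \<theta>) = ?S" by (auto simp: einterval_def)
  then have "(LBINT x=0..\<theta>. x ^ k * ln \<bar>2 * sin (x / 2)\<bar> ^ (j - k - 1)) =
      (LINT x:?S|lborel. x ^ k * ln \<bar>2 * sin (x / 2)\<bar> ^ (j - k - 1))"
    using assms by (simp add: interval_lebesgue_integral_def)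
  also have "\<dots> = (LINT x:?S|lborel. ?g x)"
  proof (rule set_lebesgue_integral_cong)
    show "\<forall>x. x \<in> ?S \<longrightarrow> x ^ k * ln \<bar>2 * sin (x / 2)\<bar> ^ (j - k - 1) = ?g x"
    proof (intro allI impI)
      fix x assume "x \<in> ?S"
      then have "sin (x / 2) > 0" using assms by (intro sin_gt_zero) auto
      then show "x ^ k * ln \<bar>2 * sin (x / 2)\<bar> ^ (j - k - 1) = ?g x" by simp
    qed
  qed simp
  also have "\<dots> = (LINT x:?S|lebesgue. ?g x)"
    unfolding set_lebesgue_integral_def by (rule integral_completion[symmetric]) measurable
  also have "\<dots> = integral ?S ?g"
    using absolutely_integrable_power_ln_sin_half[OF assms] by (rule set_lebesgue_integral_eq_integral)
  finally show ?thesis unfolding Ls_def by simp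
qed

lemma sums_restrict_to_same_parity:
  fixes f :: "nat \<Rightarrow> 'a::real_normed_vector"
  assumes "f sums s" and "\<And>n. n < k \<or> odd (n + k) \<Longrightarrow> f n = 0"
  shows "(\<lambda>q. f (k + 2 * q)) sums s"
proof (subst sums_mono_reindex)
  show "strict_mono (\<lambda>q. k + 2 * q)" by (intro strict_monoI) auto
  show "f n = 0" if "n \<notin> range (\<lambda>q. k + 2 * q)" for n
  proof (rule assms(2))
    show "n < k \<or> odd (n + k)"
    proof (rule ccontr)
      assume "\<not> (n < k \<or> odd (n + k))"
      then have "n = k + 2 * ((n - k) div 2)" by auto
      then show False using that by blast
    qed
  qed
qed (rule assms(1))

lemma Ls_sums:
  fixes j k :: nat and \<theta> :: real
  assumes "k \<ge> 1" "0 < \<theta>" "\<theta> \<le> pi"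
  defines "\<sigma> \<equiv> sin (\<theta> / 2)" and "r \<equiv> j - k - 1"
  shows "(\<lambda>q. (-1) ^ q / fact (k + 2 * q) * (2 * \<sigma>) ^ (2 * q) * Q (k + 1) (2 * q) 2 *
            log2_primitive_factor r (k + 2 * q + 1) (ln \<sigma>))
         sums (- Ls j k \<theta> / (fact k * (2 * \<sigma>) ^ (k + 1) * ln 2 ^ r))"
proof -
  define t where "t q = (-1) ^ q / fact (k + 2 * q) * (2 * \<sigma>) ^ (2 * q) * Q (k + 1) (2 * q) 2 *
      log2_primitive_factor r (k + 2 * q + 1) (ln \<sigma>)" for q
  define T where "T n = 2 ^ Suc k * arcsin_deriv_coeff k n * log2_primitive r (Suc n) \<sigma>" for n
  define c where "c = fact k * (2 * \<sigma>) ^ (k + 1) * ln 2 ^ r"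
  have "\<sigma> > 0" unfolding \<sigma>_def using assms by (intro sin_gt_zero) auto
  then have "c \<noteq> 0" unfolding c_def by simp
  have "T sums (- Ls j k \<theta>)"
    using sums_integral_power_ln_sin_half[OF assms(1-3), of r]
    unfolding T_def \<sigma>_def r_def Ls_eq_integral[OF assms(1-3)] by simp
  then have "(\<lambda>q. T (k + 2 * q)) sums (- Ls j k \<theta>)"
    by (rule sums_restrict_to_same_parity) (simp add: T_def arcsin_deriv_coeff_eq_0)
  moreover have "T (k + 2 * q) = c * t q" for q
  proof -
    have "(-4 :: real) ^ q = (-1) ^ q * 2 ^ (2 * q)"
      by (simp add: power_mult flip: power_mult_distrib)
    then show ?thesis
      unfolding T_def c_def t_def arcsin_deriv_coeff_Q log2_primitive_eq[OF \<open>\<sigma> > 0\<close>]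
      by (simp add: power_mult_distrib power_add field_simps)
  qed
  ultimately have "(\<lambda>q. c * t q / c) sums (- Ls j k \<theta> / c)"
    by (intro sums_divide) simp
  then have "t sums (- Ls j k \<theta> / c)"
    using \<open>c \<noteq> 0\<close> by simp
  then show ?thesis unfolding t_def c_def .
qed

theorem theorem4p1:
  fixes k j :: nat and \<theta> :: real
  assumes "k \<ge> 1" and "j \<ge> k + 1" and "0 < \<theta>" and "\<theta> \<le> pi"
  defines "\<sigma> \<equiv> sin (\<theta> / 2)"
  defines "L \<equiv> ln \<sigma>"
  shows "Ls j k \<theta> =
    (ln 2) ^ j * (2 * \<sigma> / ln 2) ^ (k + 1) *
      ( fact k * (\<Sum>q. (let q' = Suc q in
            (-1) ^ (q' + 1) / fact (k + 2 * q') * (2 * \<sigma>) ^ (2 * q') * Q (k + 1) (2 * q') 2 *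
            (\<Sum>l=0..j-k-1. real ((j - k - 1) choose l) / (ln 2) ^ l *
               (\<Sum>p=0..l. (-1) ^ p * falling_fact (real l) p * L ^ (l - p)
                              / real (k + 2 * q' + 1) ^ (p + 1)))))
        - (\<Sum>l=0..j-k-1. real ((j - k - 1) choose l) / (ln 2) ^ l *
             (\<Sum>p=0..l. (-1) ^ p * falling_fact (real l) p * L ^ (l - p)
                            / real (k + 1) ^ (p + 1))))"
proof -
  define r where "r = j - k - 1"
  define t where "t q = (-1) ^ q / fact (k + 2 * q) * (2 * \<sigma>) ^ (2 * q) * Q (k + 1) (2 * q) 2 *
      log2_primitive_factor r (k + 2 * q + 1) L" for q
  define A where "A = (2 * \<sigma>) ^ (k + 1) * ln 2 ^ r"
  have "\<sigma> > 0" unfolding \<sigma>_def using assms by (intro sin_gt_zero) auto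
  then have "A \<noteq> 0" unfolding A_def by simp
  have "(\<lambda>q. t (Suc q)) sums (- Ls j k \<theta> / (fact k * A) - t 0)"
    using Ls_sums[OF assms(1,3,4), of j] sums_Suc_iff[of t]
    unfolding t_def A_def \<sigma>_def L_def r_def by (simp add: mult.assoc)
  moreover have "t 0 = log2_primitive_factor r (k + 1) L / fact k"
    by (simp add: t_def Q_def stirling1s_def)
  moreover have "(\<lambda>q. let q' = Suc q in
            (-1) ^ (q' + 1) / fact (k + 2 * q') * (2 * \<sigma>) ^ (2 * q') * Q (k + 1) (2 * q') 2 *
            (\<Sum>l=0..j-k-1. real ((j - k - 1) choose l) / (ln 2) ^ l *
               (\<Sum>p=0..l. (-1) ^ p * falling_fact (real l) p * L ^ (l - p)
                              / real (k + 2 * q' + 1) ^ (p + 1)))) = (\<lambda>q. - t (Suc q))"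
    by (simp add: t_def r_def log2_primitive_factor_def log_primitive_factor_def Let_def algebra_simps)
  moreover have "(ln 2) ^ j * (2 * \<sigma> / ln 2) ^ (k + 1) = A"
  proof -
    have "j = r + (k + 1)" using assms(2) unfolding r_def by simp
    then show ?thesis unfolding A_def by (simp add: power_add power_divide)
  qed
  ultimately show ?thesis
    using \<open>A \<noteq> 0\<close> unfolding sums_iff
    by (simp add: suminf_minus r_def log2_primitive_factor_def log_primitive_factor_def field_simps)
qed

end
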